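(* Let $\mathbb B=\{q\in\mathbb H:|q|<1\}$ and let $f(q)=\sum_{n=0}^\infty q^na_n$ ($a_n\in\mathbb H$) be a slice regular function on $\mathbb B$. Suppose $A:=\sup_{q\in\mathbb B}\mathrm{Re}\,f(q)<+\infty$. Then $$|a_n|\le 2\big(A-\mathrm{Re}\,f(0)\big)\qquad\forall\, n\in\mathbb N=\{1,2,\dots\};$$ $$|f(q)-f(0)|\le\frac{2r}{1-r}\big(A-\mathrm{Re}\,f(0)\big)\qquad\forall\,|q|\le r<1;$$ $$\mathrm{Re}\,f(q)\le\frac{2r}{1+r}A+\frac{1-r}{1+r}\mathrm{Re}\,f(0)\qquad\forall\,|q|\le r<1;$$ $$|f^{(n)}(q)|\le\frac{2\,n!}{(1-r)^{n+1}}\big(A-\mathrm{Re}\,f(0)\big)\qquad\forall\,|q|\le r<1,\ n\in\mathbb N.$$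
   Context: $\mathbb H$ denotes the quaternions; $\mathrm{Re}\,q$ and $|q|$ are real part and modulus. $\mathbb S=\{q\in\mathbb H:q^2=-1\}$ and $\mathbb C_I=\mathbb R+I\mathbb R$ for $I\in\mathbb S$. A function $f$ on a domain $\Omega\subseteq\mathbb H$ is slice regular if for every $I\in\mathbb S$ its restriction $f_I$ to $\Omega\cap\mathbb C_I$ has continuous partial derivatives and satisfies $\frac12\big(\frac{\partial}{\partial x}+I\frac{\partial}{\partial y}\big)f_I(x+yI)=0$; on a ball centred at $0$ such functions are exactly convergent power series $\sum q^na_n$ with right coefficients. The slice derivative of $f$ at $x+yI$ is $\frac12\big(\frac{\partial}{\partial x}-I\frac{\partial}{\partial y}\big)f_I(x+yI)$ (which equals $\partial f/\partial x$), and $f^{(n)}$ denotes the $n$-th iterated slice derivative, so that $f^{(n)}(q)=\sum_{m\ge n}m(m-1)\cdots(m-n+1)q^{m-n}a_m$. *)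

theory Defs
  imports "HOL-Analysis.Analysis"
begin

text \<open>Quaternions q = x0 + x1 i + x2 j + x3 k are represented as 4-tuples of reals.
  The norm inherited from the product type is the Euclidean norm
  sqrt(x0^2+x1^2+x2^2+x3^2), i.e. the quaternion modulus; addition, subtraction,
  zero and real scalar multiplication are componentwise, as for quaternions.\<close>

type_synonym quat = "real \<times> real \<times> real \<times> real"

fun qmult :: "quat \<Rightarrow> quat \<Rightarrow> quat" where
  "qmult (a1, b1, c1, d1) (a2, b2, c2, d2) =
     (a1*a2 - b1*b2 - c1*c2 - d1*d2,
      a1*b2 + b1*a2 + c1*d2 - d1*c2,
      a1*c2 - b1*d2 + c1*a2 + d1*b2,
      a1*d2 + b1*c2 - c1*b2 + d1*a2)"

definition qone :: quat where "qone = (1, 0, 0, 0)"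

fun qpow :: "quat \<Rightarrow> nat \<Rightarrow> quat" where
  "qpow q 0 = qone"
| "qpow q (Suc n) = qmult (qpow q n) q"

definition qRe :: "quat \<Rightarrow> real" where "qRe q = fst q"

definition qball :: "quat set" where "qball = {q. norm q < 1}"

definition qseries :: "(nat \<Rightarrow> quat) \<Rightarrow> quat \<Rightarrow> quat" where
  "qseries a q = (\<Sum>n. qmult (qpow q n) (a n))"

text \<open>n-th slice derivative of the power series with coefficients a:
  f^(n)(q) = sum_{m>=n} m(m-1)...(m-n+1) q^(m-n) a_m.\<close>
definition slice_deriv :: "(nat \<Rightarrow> quat) \<Rightarrow> nat \<Rightarrow> quat \<Rightarrow> quat" where
  "slice_deriv a n q =
     (\<Sum>k. (fact (k + n) / fact k :: real) *\<^sub>R qmult (qpow q k) (a (k + n)))"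

end

theory Submission
  imports Defs "HOL-Complex_Analysis.Conformal_Mappings"
begin

text \<open>
  On a slice \<open>C_I\<close> the real part of \<open>f\<close> is the real part of the complex power series
  \<open>\<Sum> z^n c_n\<close>, where \<open>c_n\<close> is the \<open>C_I\<close>-component of \<open>a_n\<close>; choosing \<open>I\<close> with
  \<open>a_n \<in> C_I\<close> gives \<open>|c_n| = |a_n|\<close>. The coefficient bound is therefore Caratheodory's
  inequality \<open>|c_n| \<le> 2 (A - Re c_0)\<close> for power series on the disc with real part at most \<open>A\<close>.
  It is proved by sampling \<open>g(\<theta>) = \<Sum> c_m \<rho>^m e^{im\<theta>}\<close> at the \<open>N\<close>-th roots of unity: as
  \<open>Re g \<le> A\<close>, the discrete Fourier coefficients satisfy \<open>|G_n + cnj G_{-n}| \<le> 2 (A - Re G_0)\<close>,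
  and \<open>G_n, G_{-n}, G_0\<close> differ from \<open>c_n \<rho>^n, 0, c_0\<close> only by aliased tails that vanish as
  \<open>N\<close> grows. The bound on \<open>Re f\<close> is Harnack's inequality, obtained from the Schwarz lemma
  applied to \<open>w / (2B - w)\<close> with \<open>w = f - f(0)\<close>. The two remaining bounds follow by summing
  the coefficient bound against geometric and binomial series.
\<close>

lemma norm_quat: "norm ((a, b, c, d) :: quat) = sqrt (a\<^sup>2 + b\<^sup>2 + c\<^sup>2 + d\<^sup>2)"
  by (simp add: norm_Pair add.assoc)

lemma norm_qmult: "norm (qmult p q) = norm p * norm q"
proof -
  obtain a b c d e f g h where "p = (a, b, c, d)" "q = (e, f, g, h)"
    by (cases p, cases q) auto
  moreover have "(a*e - b*f - c*g - d*h)\<^sup>2 + (a*f + b*e + c*h - d*g)\<^sup>2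
      + (a*g - b*h + c*e + d*f)\<^sup>2 + (a*h + b*g - c*f + d*e)\<^sup>2
    = (a\<^sup>2 + b\<^sup>2 + c\<^sup>2 + d\<^sup>2) * (e\<^sup>2 + f\<^sup>2 + g\<^sup>2 + h\<^sup>2)"
    by algebra
  ultimately show ?thesis
    by (simp add: norm_quat real_sqrt_mult [symmetric])
qed

lemma norm_qpow: "norm (qpow q n) = norm q ^ n"
  by (induction n) (simp_all add: norm_qmult qone_def norm_quat)

lemma qmult_qone_left [simp]: "qmult qone q = q"
  by (cases q) (simp add: qone_def)

lemma qmult_zero_left [simp]: "qmult 0 q = 0"
  by (cases q) (simp add: zero_prod_def)

lemma qpow_zero_Suc: "qpow 0 (Suc n) = 0"
  by (cases "qpow 0 n") (simp add: zero_prod_def)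

lemma norm_qmult_qpow: "norm (qmult (qpow q n) a) = norm a * norm q ^ n"
  by (simp add: norm_qmult norm_qpow mult.commute)

section \<open>Slices\<close>

text \<open>\<open>slice i j k (x + iy) = x + yI\<close> with \<open>I = i e\<^sub>1 + j e\<^sub>2 + k e\<^sub>3\<close>, a point of \<open>\<bbbS>\<close> when
  \<open>i\<^sup>2 + j\<^sup>2 + k\<^sup>2 = 1\<close>; \<open>slice_coeff i j k a\<close> is the \<open>C_I\<close>-component of \<open>a\<close>.\<close>

definition slice :: "real \<Rightarrow> real \<Rightarrow> real \<Rightarrow> complex \<Rightarrow> quat" where
  "slice i j k z = (Re z, Im z * i, Im z * j, Im z * k)"

definition slice_coeff :: "real \<Rightarrow> real \<Rightarrow> real \<Rightarrow> quat \<Rightarrow> complex" where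
  "slice_coeff i j k = (\<lambda>(a0, a1, a2, a3). Complex a0 (i * a1 + j * a2 + k * a3))"

lemma qmult_slice:
  assumes "i\<^sup>2 + j\<^sup>2 + k\<^sup>2 = 1"
  shows "qmult (slice i j k z) (slice i j k w) = slice i j k (z * w)"
proof -
  have "Im z * Im w = Im z * Im w * (i\<^sup>2 + j\<^sup>2 + k\<^sup>2)"
    using assms by simp
  then show ?thesis
    by (simp add: slice_def power2_eq_square algebra_simps)
qed

lemma qpow_slice:
  assumes "i\<^sup>2 + j\<^sup>2 + k\<^sup>2 = 1"
  shows "qpow (slice i j k z) n = slice i j k (z ^ n)"
proof (induction n)
  case 0
  show ?case
    by (simp add: slice_def qone_def)
next
  case (Suc n)
  then show ?case
    by (simp add: qmult_slice [OF assms] mult.commute)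
qed

lemma norm_slice:
  assumes "i\<^sup>2 + j\<^sup>2 + k\<^sup>2 = 1"
  shows "norm (slice i j k z) = norm z"
proof -
  have "(Im z * i)\<^sup>2 + (Im z * j)\<^sup>2 + (Im z * k)\<^sup>2 = (Im z)\<^sup>2"
    using assms by (simp add: power_mult_distrib flip: distrib_left)
  then show ?thesis
    by (simp add: slice_def norm_quat cmod_def add.assoc)
qed

lemma slice_coeff_slice:
  assumes "i\<^sup>2 + j\<^sup>2 + k\<^sup>2 = 1"
  shows "slice_coeff i j k (slice i j k z) = z"
proof -
  have "i * (Im z * i) + j * (Im z * j) + k * (Im z * k) = Im z * (i\<^sup>2 + j\<^sup>2 + k\<^sup>2)"
    by (simp add: power2_eq_square algebra_simps)
  then show ?thesis
    using assms by (simp add: slice_def slice_coeff_def)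
qed

lemma qRe_qmult_slice: "qRe (qmult (slice i j k z) a) = Re (z * slice_coeff i j k a)"
  by (cases a) (simp add: slice_def slice_coeff_def qRe_def algebra_simps)

lemma Re_slice_coeff [simp]: "Re (slice_coeff i j k a) = qRe a"
  by (cases a) (simp add: slice_coeff_def qRe_def)

lemma norm_slice_coeff_le:
  assumes "i\<^sup>2 + j\<^sup>2 + k\<^sup>2 = 1"
  shows "norm (slice_coeff i j k a) \<le> norm a"
proof -
  obtain a0 a1 a2 a3 where a: "a = (a0, a1, a2, a3)"
    by (cases a) auto
  have "(i\<^sup>2 + j\<^sup>2 + k\<^sup>2) * (a1\<^sup>2 + a2\<^sup>2 + a3\<^sup>2) - (i*a1 + j*a2 + k*a3)\<^sup>2
      = (i*a2 - j*a1)\<^sup>2 + (i*a3 - k*a1)\<^sup>2 + (j*a3 - k*a2)\<^sup>2"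
    by algebra
  then have "(i*a1 + j*a2 + k*a3)\<^sup>2 \<le> a1\<^sup>2 + a2\<^sup>2 + a3\<^sup>2"
    using assms by (metis add_nonneg_nonneg diff_ge_0_iff_ge mult_1 zero_le_power2)
  then show ?thesis
    by (simp add: a slice_coeff_def norm_quat cmod_def add.assoc)
qed

lemma quat_in_slice: "\<exists>i j k z. i\<^sup>2 + j\<^sup>2 + k\<^sup>2 = 1 \<and> slice i j k z = a"
proof -
  obtain a0 a1 a2 a3 where a: "a = (a0, a1, a2, a3)"
    by (cases a) auto
  define v where "v = sqrt (a1\<^sup>2 + a2\<^sup>2 + a3\<^sup>2)"
  show ?thesis
  proof (cases "v = 0")
    case True
    then have "a1 = 0 \<and> a2 = 0 \<and> a3 = 0"
      by (simp add: v_def add_nonneg_eq_0_iff)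
    then have "slice 1 0 0 (complex_of_real a0) = a"
      by (simp add: slice_def a)
    then show ?thesis
      by force
  next
    case False
    moreover have "v \<ge> 0"
      by (simp add: v_def)
    ultimately have "v > 0"
      by simp
    have v2: "v\<^sup>2 = a1\<^sup>2 + a2\<^sup>2 + a3\<^sup>2"
      by (simp add: v_def)
    have "(a1/v)\<^sup>2 + (a2/v)\<^sup>2 + (a3/v)\<^sup>2 = (a1\<^sup>2 + a2\<^sup>2 + a3\<^sup>2) / v\<^sup>2"
      by (simp add: power_divide add_divide_distrib)
    also have "\<dots> = 1"
      using \<open>v > 0\<close> by (simp flip: v2)
    finally have "(a1/v)\<^sup>2 + (a2/v)\<^sup>2 + (a3/v)\<^sup>2 = 1" .
    moreover have "slice (a1/v) (a2/v) (a3/v) (Complex a0 v) = a"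
      using \<open>v > 0\<close> by (simp add: slice_def a)
    ultimately show ?thesis
      by blast
  qed
qed

section \<open>Aliasing on roots of unity\<close>

lemma sum_cis_roots_of_unity:
  assumes "N > 0"
  shows "(\<Sum>k<N. cis (of_int d * (2 * pi * real k / real N))) = (if int N dvd d then of_nat N else 0)"
proof -
  define \<omega> where "\<omega> = cis (of_int d * (2 * pi / real N))"
  have powers: "cis (of_int d * (2 * pi * real k / real N)) = \<omega> ^ k" for k
    unfolding \<omega>_def Complex.DeMoivre by (simp add: algebra_simps)
  show ?thesis
  proof (cases "int N dvd d")
    case True
    then obtain j where "d = int N * j"
      by blast
    then have "\<omega> = cis (2 * pi * of_int j)"
      using assms by (simp add: \<omega>_def mult_ac)
    then have "\<omega> = 1"
      by simp
    then show ?thesis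
      using True by (simp only: powers) simp
  next
    case False
    have "real N * (of_int d * (2 * pi / real N)) = 2 * pi * of_int d"
      using assms by simp
    then have "\<omega> ^ N = 1"
      unfolding \<omega>_def Complex.DeMoivre by simp
    moreover have "\<omega> \<noteq> 1"
    proof
      assume "\<omega> = 1"
      then have "cos (of_int d * (2 * pi / real N)) = 1"
        by (metis \<omega>_def cis.sel(1) one_complex.sel(1))
      then obtain m :: int where "of_int d * (2 * pi / real N) = of_int m * 2 * pi"
        using cos_one_2pi_int by blast
      then have "d = int N * m"
        using assms by (simp add: field_simps) (metis of_int_eq_iff of_int_mult of_int_of_nat_eq)
      with False show False
        by simp
    qed
    ultimately have "(\<Sum>k<N. \<omega> ^ k) = 0"
      by (simp add: sum_gp_strict)
    then show ?thesis
      using False by (simp only: powers) simp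
  qed
qed

definition aliased_sum :: "nat \<Rightarrow> (nat \<Rightarrow> complex) \<Rightarrow> int \<Rightarrow> complex" where
  "aliased_sum N b p = (\<Sum>m. if int N dvd int m - p then b m else 0)"

lemma discrete_fourier_coeff:
  fixes b :: "nat \<Rightarrow> complex"
  assumes "N > 0" and summable: "summable (\<lambda>m. norm (b m))"
  shows "(\<Sum>k<N. (\<Sum>m. b m * cis (real m * (2 * pi * real k / real N)))
                    * cis (- (of_int p * (2 * pi * real k / real N))))
       = of_nat N * aliased_sum N b p"
proof -
  have summable_cis: "summable (\<lambda>m. b m * cis (real m * \<theta>))" for \<theta>
    by (rule summable_norm_cancel) (simp add: norm_mult summable)
  have "(\<Sum>k<N. (\<Sum>m. b m * cis (real m * (2 * pi * real k / real N))) * cis (- (of_int p * (2 * pi * real k / real N))))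
      = (\<Sum>k<N. \<Sum>m. b m * cis (real m * (2 * pi * real k / real N)) * cis (- (of_int p * (2 * pi * real k / real N))))"
    by (intro sum.cong refl suminf_mult2 summable_cis)
  also have "\<dots> = (\<Sum>m. \<Sum>k<N. b m * cis (real m * (2 * pi * real k / real N)) * cis (- (of_int p * (2 * pi * real k / real N))))"
    by (intro suminf_sum [symmetric] summable_mult2 summable_cis)
  also have "\<dots> = (\<Sum>m. of_nat N * (if int N dvd int m - p then b m else 0))"
  proof (rule suminf_cong)
    fix m
    have "cis (real m * \<theta>) * cis (- (of_int p * \<theta>)) = cis (of_int (int m - p) * \<theta>)" for \<theta>
      by (simp add: cis_mult algebra_simps)
    then have "(\<Sum>k<N. b m * cis (real m * (2 * pi * real k / real N)) * cis (- (of_int p * (2 * pi * real k / real N))))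
        = b m * (\<Sum>k<N. cis (of_int (int m - p) * (2 * pi * real k / real N)))"
      by (simp only: mult.assoc sum_distrib_left)
    also have "\<dots> = of_nat N * (if int N dvd int m - p then b m else 0)"
      using assms(1) by (simp only: sum_cis_roots_of_unity) simp
    finally show "(\<Sum>k<N. b m * cis (real m * (2 * pi * real k / real N)) * cis (- (of_int p * (2 * pi * real k / real N))))
        = of_nat N * (if int N dvd int m - p then b m else 0)" .
  qed
  also have "\<dots> = of_nat N * aliased_sum N b p"
    unfolding aliased_sum_def
    by (rule suminf_mult, rule summable_norm_cancel, rule summable_comparison_test' [OF summable]) auto
  finally show ?thesis .
qed

lemma norm_aliased_sum_diff_le:
  fixes b :: "nat \<Rightarrow> complex"
  assumes summable: "summable (\<lambda>m. norm (b m))" and "int M + \<bar>p\<bar> \<le> int N"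
  shows "norm (aliased_sum N b p - (if p \<ge> 0 then b (nat p) else 0)) \<le> (\<Sum>i. norm (b (i + M)))"
proof -
  define g where "g m = (if int N dvd int m - p \<and> int m \<noteq> p then b m else 0)" for m
  have g_le: "norm (g m) \<le> norm (b m)" for m
    by (simp add: g_def)
  have g_vanishes: "g m = 0" if "m < M" for m
  proof -
    have "\<not> int N dvd int m - p" if "int m \<noteq> p"
      using assms(2) \<open>m < M\<close> that dvd_imp_le_int [of "int m - p" "int N"] by auto
    then show ?thesis
      by (auto simp: g_def)
  qed
  have summable_g: "summable (\<lambda>m. norm (g m))"
    using g_le by (intro summable_comparison_test' [OF summable]) simp
  have "(\<lambda>m. (if int N dvd int m - p then b m else 0) - (if int m = p then b m else 0)) sums
      (aliased_sum N b p - (if p \<ge> 0 then b (nat p) else 0))"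
  proof (rule sums_diff)
    show "(\<lambda>m. if int N dvd int m - p then b m else 0) sums aliased_sum N b p"
      unfolding aliased_sum_def
      by (rule summable_sums, rule summable_norm_cancel, rule summable_comparison_test' [OF summable]) auto
    show "(\<lambda>m. if int m = p then b m else 0) sums (if p \<ge> 0 then b (nat p) else 0)"
    proof (cases "p \<ge> 0")
      case True
      then have "(\<lambda>m. if int m = p then b m else 0) = (\<lambda>m. if m = nat p then b m else 0)"
        by (intro ext) auto
      then show ?thesis
        using True sums_single [of "nat p" b] by simp
    qed simp
  qed
  moreover have "(\<lambda>m. (if int N dvd int m - p then b m else 0) - (if int m = p then b m else 0)) = g"
    by (intro ext) (auto simp: g_def)
  ultimately have "g sums (aliased_sum N b p - (if p \<ge> 0 then b (nat p) else 0))"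
    by simp
  then have "(\<lambda>i. g (i + M)) sums (aliased_sum N b p - (if p \<ge> 0 then b (nat p) else 0))"
    by (simp add: sums_zero_iff_shift g_vanishes)
  moreover have "norm (\<Sum>i. g (i + M)) \<le> (\<Sum>i. norm (g (i + M)))"
    using summable_g by (intro summable_norm summable_ignore_initial_segment)
  ultimately have "norm (aliased_sum N b p - (if p \<ge> 0 then b (nat p) else 0)) \<le> (\<Sum>i. norm (g (i + M)))"
    by (simp add: sums_iff)
  also have "\<dots> \<le> (\<Sum>i. norm (b (i + M)))"
    using summable summable_g g_le by (intro suminf_le summable_ignore_initial_segment)
  finally show ?thesis .
qed

section \<open>Caratheodory's coefficient inequality\<close>

lemma norm_discrete_fourier_le:
  fixes F :: "nat \<Rightarrow> complex"
  assumes "0 < n" "n < N" and Re_le: "\<And>k. k < N \<Longrightarrow> Re (F k) \<le> A"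
  shows "norm ((\<Sum>k<N. F k * cis (- (real n * (2 * pi * real k / real N))))
              + cnj (\<Sum>k<N. F k * cis (real n * (2 * pi * real k / real N))))
         \<le> 2 * (real N * A - Re (\<Sum>k<N. F k))"
proof -
  define E where "E k = cis (- (real n * (2 * pi * real k / real N)))" for k
  have sum_E: "(\<Sum>k<N. E k) = 0"
    using sum_cis_roots_of_unity [of N "- int n"] assms(1,2) by (simp add: E_def nat_dvd_not_less)
  have "(\<Sum>k<N. F k * E k) + cnj (\<Sum>k<N. F k * cis (real n * (2 * pi * real k / real N)))
      = (\<Sum>k<N. (F k + cnj (F k)) * E k)"
    by (simp add: E_def cnj_sum cis_cnj sum.distrib distrib_right)
  \<comment> \<open>The constant \<open>2A\<close> is free to add since the \<open>E k\<close> sum to zero; it makes all weights nonnegative.\<close>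
  also have "\<dots> = (\<Sum>k<N. of_real (2 * A) * E k) - (\<Sum>k<N. of_real (2 * (A - Re (F k))) * E k)"
    by (simp add: complex_add_cnj algebra_simps flip: sum_subtractf)
  also have "(\<Sum>k<N. of_real (2 * A) * E k) = 0"
    by (simp add: sum_E flip: sum_distrib_left)
  finally have "norm ((\<Sum>k<N. F k * E k) + cnj (\<Sum>k<N. F k * cis (real n * (2 * pi * real k / real N))))
      = norm (\<Sum>k<N. of_real (2 * (A - Re (F k))) * E k)"
    by (simp add: norm_minus_cancel)
  also have "\<dots> \<le> (\<Sum>k<N. norm (of_real (2 * (A - Re (F k))) * E k))"
    by (rule norm_sum)
  also have "\<dots> = (\<Sum>k<N. 2 * (A - Re (F k)))"
    using Re_le by (intro sum.cong refl) (simp only: E_def norm_mult norm_of_real norm_cis mult_1_right, simp)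
  also have "\<dots> = 2 * (real N * A - Re (\<Sum>k<N. F k))"
    by (simp add: sum_subtractf Re_sum flip: sum_distrib_left)
  finally show ?thesis
    by (simp add: E_def)
qed

lemma norm_aliased_sum_le_of_Re_le_on_circle:
  fixes b :: "nat \<Rightarrow> complex"
  assumes summable: "summable (\<lambda>m. norm (b m))"
    and Re_le: "\<And>\<theta>. Re (\<Sum>m. b m * cis (real m * \<theta>)) \<le> A" and "0 < n" "n < N"
  shows "norm (aliased_sum N b (int n) + cnj (aliased_sum N b (- int n))) \<le> 2 * (A - Re (aliased_sum N b 0))"
proof -
  define F where "F k = (\<Sum>m. b m * cis (real m * (2 * pi * real k / real N)))" for k
  let ?G = "aliased_sum N b"
  have "N > 0"
    using assms by simp
  have G_pos: "(\<Sum>k<N. F k * cis (- (real n * (2 * pi * real k / real N)))) = of_nat N * ?G (int n)"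
    using discrete_fourier_coeff [OF \<open>N > 0\<close> summable, of "int n"] by (simp add: F_def)
  have G_neg: "(\<Sum>k<N. F k * cis (real n * (2 * pi * real k / real N))) = of_nat N * ?G (- int n)"
    using discrete_fourier_coeff [OF \<open>N > 0\<close> summable, of "- int n"] by (simp add: F_def)
  have G_zero: "(\<Sum>k<N. F k) = of_nat N * ?G 0"
    using discrete_fourier_coeff [OF \<open>N > 0\<close> summable, of 0] by (simp add: F_def)
  have "Re (F k) \<le> A" for k
    unfolding F_def by (rule Re_le)
  then have bound_N: "norm (of_nat N * ?G (int n) + cnj (of_nat N * ?G (- int n)))
      \<le> 2 * (real N * A - Re (of_nat N * ?G 0))"
    using norm_discrete_fourier_le [of n N F A] assms(3,4) unfolding G_pos G_neg G_zero by simp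
  have factor: "of_nat N * ?G (int n) + cnj (of_nat N * ?G (- int n))
      = of_nat N * (?G (int n) + cnj (?G (- int n)))"
    by (simp add: distrib_left)
  have "real N * norm (?G (int n) + cnj (?G (- int n))) \<le> real N * (2 * (A - Re (?G 0)))"
    using bound_N unfolding factor by (simp add: norm_mult right_diff_distrib mult_ac)
  then show ?thesis
    using \<open>N > 0\<close> by simp
qed

lemma norm_coeff_le_of_Re_le_on_circle:
  fixes b :: "nat \<Rightarrow> complex"
  assumes summable: "summable (\<lambda>m. norm (b m))"
    and Re_le: "\<And>\<theta>. Re (\<Sum>m. b m * cis (real m * \<theta>)) \<le> A" and "n \<ge> 1"
  shows "norm (b n) \<le> 2 * (A - Re (b 0))"
proof (rule field_le_epsilon)
  fix \<epsilon> :: real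
  assume "\<epsilon> > 0"
  then obtain M where tail_small: "norm (\<Sum>i. norm (b (i + M))) < \<epsilon> / 4"
    using suminf_exist_split [OF _ summable, of "\<epsilon> / 4"] by auto
  define T where "T = (\<Sum>i. norm (b (i + M)))"
  define N where "N = M + n + 1"
  let ?G = "aliased_sum N b"
  have bound: "\<And>p. \<bar>p\<bar> \<le> int n \<Longrightarrow> int M + \<bar>p\<bar> \<le> int N"
    by (auto simp: N_def)
  have "norm (?G (int n) - b n) \<le> T"
    using norm_aliased_sum_diff_le [OF summable bound, of "int n"] by (simp add: T_def)
  moreover have "norm (?G (- int n)) \<le> T"
    using norm_aliased_sum_diff_le [OF summable bound, of "- int n"] \<open>n \<ge> 1\<close> by (simp add: T_def)
  moreover have "norm (?G 0 - b 0) \<le> T"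
    using norm_aliased_sum_diff_le [OF summable bound, of 0] by (simp add: T_def)
  then have "Re (b 0) - Re (?G 0) \<le> T"
    using complex_Re_le_cmod [of "b 0 - ?G 0"] by (simp add: norm_minus_commute)
  moreover have "norm (b n) \<le> norm (?G (int n) + cnj (?G (- int n))) + norm (?G (- int n)) + norm (?G (int n) - b n)"
  proof -
    have "b n = (?G (int n) + cnj (?G (- int n))) - cnj (?G (- int n)) - (?G (int n) - b n)"
      by simp
    then show ?thesis
      by (metis complex_mod_cnj norm_triangle_ineq4 add_right_mono order_trans)
  qed
  moreover have "norm (?G (int n) + cnj (?G (- int n))) \<le> 2 * (A - Re (?G 0))"
    using \<open>n \<ge> 1\<close> by (intro norm_aliased_sum_le_of_Re_le_on_circle [OF summable Re_le]) (simp_all add: N_def)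
  moreover have "T < \<epsilon> / 4"
    using tail_small by (simp add: T_def)
  ultimately show "norm (b n) \<le> 2 * (A - Re (b 0)) + \<epsilon>"
    by (simp add: algebra_simps)
qed

lemma norm_coeff_le_of_Re_le_on_disc:
  fixes c :: "nat \<Rightarrow> complex"
  assumes summable: "\<And>r. 0 \<le> r \<Longrightarrow> r < 1 \<Longrightarrow> summable (\<lambda>m. norm (c m) * r ^ m)"
    and Re_le: "\<And>z. norm z < 1 \<Longrightarrow> Re (\<Sum>m. c m * z ^ m) \<le> A" and "n \<ge> 1"
  shows "norm (c n) \<le> 2 * (A - Re (c 0))"
proof -
  have "norm (c n) * r ^ n \<le> 2 * (A - Re (c 0))" if "0 \<le> r" "r < 1" for r
  proof -
    have "norm (c n * of_real r ^ n) \<le> 2 * (A - Re (c 0 * of_real r ^ 0))"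
    proof (rule norm_coeff_le_of_Re_le_on_circle)
      show "summable (\<lambda>m. norm (c m * of_real r ^ m))"
        using summable [OF that] that by (simp add: norm_mult norm_power)
      show "Re (\<Sum>m. c m * of_real r ^ m * cis (real m * \<theta>)) \<le> A" for \<theta>
        using Re_le [of "of_real r * cis \<theta>"] that
        by (simp add: norm_mult power_mult_distrib mult.assoc Complex.DeMoivre)
    qed fact
    then show ?thesis
      using that by (simp add: norm_mult norm_power)
  qed
  then have "eventually (\<lambda>r. norm (c n) * r ^ n \<le> 2 * (A - Re (c 0))) (at_left 1)"
    using eventually_at_left_real [of 0 1] by (auto elim: eventually_mono)
  moreover have "((\<lambda>r. norm (c n) * r ^ n) \<longlongrightarrow> norm (c n) * 1 ^ n) (at_left 1)"
    by (intro tendsto_intros)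
  ultimately show ?thesis
    using tendsto_upperbound by force
qed

section \<open>Harnack's inequality\<close>

lemma norm_less_norm_reflection:
  fixes w :: complex
  assumes "Re w < B" "0 < B"
  shows "norm w < norm (of_real (2 * B) - w)"
proof -
  have "(norm (of_real (2 * B) - w))\<^sup>2 - (norm w)\<^sup>2 = 4 * B * (B - Re w)"
    unfolding cmod_power2 by (simp add: power2_eq_square algebra_simps)
  also have "\<dots> > 0"
    using assms by simp
  finally show ?thesis
    by (simp add: power_less_imp_less_base)
qed

lemma Re_divide_one_plus_le:
  fixes h :: complex
  assumes "norm h \<le> r" "r < 1"
  shows "Re (h / (1 + h)) \<le> r / (1 + r)"
proof -
  define x t where "x = Re h" and "t = norm h"
  have "x \<le> t" "- x \<le> t"
    using abs_Re_le_cmod [of h] by (auto simp: x_def t_def)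
  have "0 \<le> t" "t \<le> r"
    using assms by (auto simp: t_def)
  have num: "Re h * Re (1 + h) + Im h * Im (1 + h) = x + t\<^sup>2"
    unfolding x_def t_def cmod_power2 by (simp add: power2_eq_square algebra_simps)
  have den: "(norm (1 + h))\<^sup>2 = 1 + 2 * x + t\<^sup>2"
    unfolding x_def t_def cmod_power2 by (simp add: power2_eq_square algebra_simps)
  have "0 \<le> r"
    using \<open>0 \<le> t\<close> \<open>t \<le> r\<close> by linarith
  have "(1 - t)\<^sup>2 > 0"
    using \<open>t \<le> r\<close> assms(2) by simp
  then have den_pos: "1 + 2 * x + t\<^sup>2 > 0"
    using \<open>- x \<le> t\<close> by (simp add: power2_eq_square algebra_simps)
  have "(x + t\<^sup>2) * (1 + r) \<le> r * (1 + 2 * x + t\<^sup>2)"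
  proof -
    have "x * (1 - r) \<le> t * (1 - r)"
      using \<open>x \<le> t\<close> assms(2) by (intro mult_right_mono) auto
    moreover have "(t - r) * (1 + t) \<le> 0"
      using \<open>0 \<le> t\<close> \<open>t \<le> r\<close> by (intro mult_nonpos_nonneg) auto
    ultimately show ?thesis
      by (simp add: power2_eq_square algebra_simps)
  qed
  then have "(x + t\<^sup>2) / (1 + 2 * x + t\<^sup>2) \<le> r / (1 + r)"
    using den_pos \<open>0 \<le> r\<close> by (simp add: divide_le_eq le_divide_eq mult.commute)
  then show ?thesis
    by (simp only: Re_divide' num den)
qed

lemma Re_le_of_Re_less_on_disc:
  fixes w :: "complex \<Rightarrow> complex"
  assumes holo: "w holomorphic_on ball 0 1" and "w 0 = 0"
    and Re_less: "\<And>\<zeta>. norm \<zeta> < 1 \<Longrightarrow> Re (w \<zeta>) < B"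
    and z: "norm z \<le> r" "r < 1"
  shows "Re (w z) \<le> 2 * B * r / (1 + r)"
proof -
  have "B > 0"
    using Re_less [of 0] \<open>w 0 = 0\<close> by simp
  \<comment> \<open>\<open>h\<close> maps the half-plane \<open>Re w < B\<close> into the unit disc, and \<open>w = 2B h / (1 + h)\<close>.\<close>
  define h where "h \<zeta> = w \<zeta> / (of_real (2 * B) - w \<zeta>)" for \<zeta>
  have nonzero: "of_real (2 * B) - w \<zeta> \<noteq> 0" if "norm \<zeta> < 1" for \<zeta>
    using Re_less [OF that] \<open>B > 0\<close> by (auto dest: arg_cong [where f = Re])
  have "h holomorphic_on ball 0 1"
    unfolding h_def using holo nonzero by (intro holomorphic_intros) auto
  moreover have "norm (h \<zeta>) < 1" if "norm \<zeta> < 1" for \<zeta>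
    using norm_less_norm_reflection [OF Re_less [OF that] \<open>B > 0\<close>] nonzero [OF that]
    by (simp add: h_def norm_divide)
  ultimately have "norm (h z) \<le> norm z"
    using Schwarz_Lemma(1) [of h z] \<open>w 0 = 0\<close> z by (simp add: h_def)
  define u where "u = h z / (1 + h z)"
  have "Re u \<le> r / (1 + r)"
    unfolding u_def using \<open>norm (h z) \<le> norm z\<close> z by (intro Re_divide_one_plus_le) auto
  have "w z = of_real (2 * B) * u"
    using nonzero [of z] z \<open>B > 0\<close> by (simp add: u_def h_def field_simps)
  then have "Re (w z) = 2 * B * Re u"
    by simp
  also have "\<dots> \<le> 2 * B * (r / (1 + r))"
    using \<open>Re u \<le> r / (1 + r)\<close> \<open>B > 0\<close> by (intro mult_left_mono) auto
  finally show ?thesis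
    by simp
qed

lemma Re_le_harnack:
  fixes S :: "complex \<Rightarrow> complex"
  assumes holo: "S holomorphic_on ball 0 1" and Re_le: "\<And>\<zeta>. norm \<zeta> < 1 \<Longrightarrow> Re (S \<zeta>) \<le> A"
    and z: "norm z \<le> r" "r < 1"
  shows "Re (S z) \<le> 2 * r / (1 + r) * A + (1 - r) / (1 + r) * Re (S 0)"
proof -
  define B\<^sub>0 where "B\<^sub>0 = A - Re (S 0)"
  have Re_le_B: "Re (S z - S 0) \<le> 2 * B * r / (1 + r)" if "B > B\<^sub>0" for B
  proof (rule Re_le_of_Re_less_on_disc [OF _ _ _ z])
    show "(\<lambda>\<zeta>. S \<zeta> - S 0) holomorphic_on ball 0 1"
      using holo by (intro holomorphic_intros)
    show "Re (S \<zeta> - S 0) < B" if "norm \<zeta> < 1" for \<zeta>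
      using Re_le [OF that] \<open>B > B\<^sub>0\<close> by (simp add: B\<^sub>0_def)
  qed simp
  have "eventually (\<lambda>B. Re (S z - S 0) \<le> 2 * B * r / (1 + r)) (at_right B\<^sub>0)"
    using eventually_at_right_less [of B\<^sub>0] by (rule eventually_mono) (rule Re_le_B)
  moreover have "((\<lambda>B. 2 * B * r / (1 + r)) \<longlongrightarrow> 2 * B\<^sub>0 * r / (1 + r)) (at_right B\<^sub>0)"
    by (intro tendsto_intros) (use z norm_ge_zero [of z] in linarith)
  ultimately have "Re (S z - S 0) \<le> 2 * B\<^sub>0 * r / (1 + r)"
    using tendsto_lowerbound by force
  moreover have "1 + r > 0"
    using z norm_ge_zero [of z] by linarith
  ultimately have "Re (S z) * (1 + r) \<le> 2 * r * A + (1 - r) * Re (S 0)"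
    by (simp add: B\<^sub>0_def field_simps)
  with \<open>1 + r > 0\<close> show ?thesis
    by (simp add: pos_le_divide_eq flip: add_divide_distrib)
qed

section \<open>Quaternionic power series\<close>

lemma sums_fact_ratio_power:
  fixes r :: real
  assumes "\<bar>r\<bar> < 1"
  shows "(\<lambda>k. fact (k + n) / fact k * r ^ k) sums (fact n / (1 - r) ^ (n + 1))"
proof -
  have "(\<lambda>k. (- (real n + 1) gchoose k) * (- r) ^ k) sums (1 + - r) powr (- (real n + 1))"
    using assms by (intro gen_binomial_real) simp
  moreover have "(- (real n + 1) gchoose k) * (- r) ^ k = real ((n + k) choose k) * r ^ k" for k
  proof -
    have "real n + 1 + of_nat k - 1 = real (n + k)"
      by simp
    then have "(- (real n + 1) gchoose k) = (-1) ^ k * real ((n + k) choose k)"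
      by (simp only: gbinomial_minus binomial_gbinomial)
    then show ?thesis
      by (simp add: power_minus [of r] mult_ac)
  qed
  moreover have "(1 + - r) powr (- (real n + 1)) = 1 / (1 - r) ^ (n + 1)"
    using assms by (simp add: powr_minus powr_realpow divide_inverse add.commute [of _ 1] flip: of_nat_Suc)
  ultimately have "(\<lambda>k. fact n * (real ((n + k) choose k) * r ^ k)) sums (fact n * (1 / (1 - r) ^ (n + 1)))"
    by (intro sums_mult) simp
  moreover have "fact (k + n) / fact k = fact n * real ((n + k) choose k)" for k
    by (simp add: binomial_fact add.commute)
  ultimately show ?thesis
    by (simp add: mult_ac)
qed

lemma summable_norm_coeff_power:
  assumes conv: "\<And>q. norm q < 1 \<Longrightarrow> summable (\<lambda>n. qmult (qpow q n) (a n))"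
    and r: "0 \<le> r" "r < 1"
  shows "summable (\<lambda>n. norm (a n) * r ^ n)"
proof -
  define s where "s = (1 + r) / 2"
  have s: "0 < s" "s < 1" "r < s"
    using r by (auto simp: s_def)
  have "norm ((s, 0, 0, 0) :: quat) = s"
    using s by (simp add: norm_quat)
  then have "(\<lambda>n. qmult (qpow (s, 0, 0, 0) n) (a n)) \<longlonglongrightarrow> 0"
    using conv s by (intro summable_LIMSEQ_zero) simp
  then have "(\<lambda>n. norm (a n) * s ^ n) \<longlonglongrightarrow> 0"
    using tendsto_norm_zero [OF \<open>_ \<longlonglongrightarrow> 0\<close>] by (simp only: norm_qmult_qpow \<open>norm ((s, 0, 0, 0) :: quat) = s\<close>)
  then have "Bseq (\<lambda>n. norm (a n) * s ^ n)"
    by (intro convergent_imp_Bseq convergentI)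
  then obtain K where K: "\<And>n. norm (a n) * s ^ n \<le> K"
    using s by (auto simp: Bseq_def abs_mult)
  have le_geometric: "norm (a n) * r ^ n \<le> K * (r / s) ^ n" for n
  proof -
    have "norm (a n) * r ^ n = (norm (a n) * s ^ n) * (r / s) ^ n"
      using s by (simp add: power_divide)
    also have "\<dots> \<le> K * (r / s) ^ n"
      using K r s by (intro mult_right_mono) auto
    finally show ?thesis .
  qed
  have "summable (\<lambda>n. K * (r / s) ^ n)"
    using r s by (intro summable_mult summable_geometric) simp
  then show ?thesis
    by (rule summable_comparison_test' [where N = 0]) (use r le_geometric in \<open>simp add: abs_mult\<close>)
qed

lemma qseries_sums:
  assumes abs_conv: "\<And>r. 0 \<le> r \<Longrightarrow> r < 1 \<Longrightarrow> summable (\<lambda>n. norm (a n) * r ^ n)"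
    and "norm q < 1"
  shows "(\<lambda>n. qmult (qpow q n) (a n)) sums qseries a q"
proof -
  have "summable (\<lambda>n. norm (qmult (qpow q n) (a n)))"
    unfolding norm_qmult_qpow by (rule abs_conv [OF norm_ge_zero assms(2)])
  then show ?thesis
    unfolding qseries_def by (rule summable_sums [OF summable_norm_cancel])
qed

lemma qseries_zero: "qseries a 0 = a 0"
proof -
  have "(\<lambda>n. qmult (qpow 0 n) (a n)) = (\<lambda>n. if n = 0 then a 0 else 0)"
  proof
    fix n
    show "qmult (qpow 0 n) (a n) = (if n = 0 then a 0 else 0)"
      by (cases n) (simp_all add: qpow_zero_Suc del: qpow.simps(2))
  qed
  then show ?thesis
    using sums_single [of 0 "\<lambda>_. a 0"] by (simp add: qseries_def sums_iff)
qed

lemma summable_norm_slice_coeff_power: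
  assumes "i\<^sup>2 + j\<^sup>2 + k\<^sup>2 = 1" and "summable (\<lambda>n. norm (a n) * r ^ n)" and "0 \<le> r"
  shows "summable (\<lambda>n. norm (slice_coeff i j k (a n)) * r ^ n)"
  using norm_slice_coeff_le [OF assms(1)] assms(3)
  by (intro summable_comparison_test' [OF assms(2), where N = 0]) (simp add: mult_right_mono)

lemma qRe_qseries_slice:
  assumes unit: "i\<^sup>2 + j\<^sup>2 + k\<^sup>2 = 1"
    and abs_conv: "\<And>r. 0 \<le> r \<Longrightarrow> r < 1 \<Longrightarrow> summable (\<lambda>n. norm (a n) * r ^ n)"
    and "norm z < 1"
  shows "qRe (qseries a (slice i j k z)) = Re (\<Sum>n. slice_coeff i j k (a n) * z ^ n)"
proof -
  have "(\<lambda>n. qRe (qmult (qpow (slice i j k z) n) (a n))) sums qRe (qseries a (slice i j k z))"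
    unfolding qRe_def using assms
    by (intro bounded_linear.sums [OF bounded_linear_fst] qseries_sums) (simp_all add: norm_slice)
  moreover have "summable (\<lambda>n. slice_coeff i j k (a n) * z ^ n)"
    by (rule summable_norm_cancel)
      (use summable_norm_slice_coeff_power [OF unit abs_conv [OF norm_ge_zero assms(3)] norm_ge_zero]
        in \<open>simp add: norm_mult norm_power\<close>)
  then have "(\<lambda>n. Re (slice_coeff i j k (a n) * z ^ n)) sums Re (\<Sum>n. slice_coeff i j k (a n) * z ^ n)"
    by (intro sums_Re summable_sums)
  ultimately show ?thesis
    by (simp add: qpow_slice [OF unit] qRe_qmult_slice mult.commute sums_unique2)
qed

lemma norm_coeff_le_qseries:
  assumes abs_conv: "\<And>r. 0 \<le> r \<Longrightarrow> r < 1 \<Longrightarrow> summable (\<lambda>n. norm (a n) * r ^ n)"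
    and Re_le: "\<And>q. norm q < 1 \<Longrightarrow> qRe (qseries a q) \<le> A" and "n \<ge> 1"
  shows "norm (a n) \<le> 2 * (A - qRe (a 0))"
proof -
  obtain i j k z where unit: "i\<^sup>2 + j\<^sup>2 + k\<^sup>2 = 1" and "slice i j k z = a n"
    using quat_in_slice by blast
  then have "norm (a n) = norm (slice_coeff i j k (a n))"
    by (metis norm_slice slice_coeff_slice)
  also have "\<dots> \<le> 2 * (A - Re (slice_coeff i j k (a 0)))"
  proof (rule norm_coeff_le_of_Re_le_on_disc)
    show "summable (\<lambda>m. norm (slice_coeff i j k (a m)) * r ^ m)" if "0 \<le> r" "r < 1" for r
      using summable_norm_slice_coeff_power [OF unit abs_conv [OF that] \<open>0 \<le> r\<close>] .
    show "Re (\<Sum>m. slice_coeff i j k (a m) * z ^ m) \<le> A" if "norm z < 1" for z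
      using Re_le [of "slice i j k z"] qRe_qseries_slice [OF unit abs_conv that] that
      by (simp add: norm_slice [OF unit])
  qed fact
  finally show ?thesis
    by simp
qed

lemma qRe_qseries_le_harnack:
  assumes abs_conv: "\<And>r. 0 \<le> r \<Longrightarrow> r < 1 \<Longrightarrow> summable (\<lambda>n. norm (a n) * r ^ n)"
    and Re_le: "\<And>q. norm q < 1 \<Longrightarrow> qRe (qseries a q) \<le> A"
    and q: "norm q \<le> r" "r < 1"
  shows "qRe (qseries a q) \<le> 2 * r / (1 + r) * A + (1 - r) / (1 + r) * qRe (a 0)"
proof -
  obtain i j k z where unit: "i\<^sup>2 + j\<^sup>2 + k\<^sup>2 = 1" and "slice i j k z = q"
    using quat_in_slice by blast
  define S where "S \<zeta> = (\<Sum>n. slice_coeff i j k (a n) * \<zeta> ^ n)" for \<zeta>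
  have Re_S: "Re (S \<zeta>) = qRe (qseries a (slice i j k \<zeta>))" if "norm \<zeta> < 1" for \<zeta>
    using qRe_qseries_slice [OF unit abs_conv that] by (simp add: S_def)
  have "norm z \<le> r"
    using q norm_slice [OF unit, of z] \<open>slice i j k z = q\<close> by simp
  have "S holomorphic_on ball 0 1"
  proof -
    have "summable (\<lambda>n. slice_coeff i j k (a n) * \<zeta> ^ n)" if "norm \<zeta> < 1" for \<zeta>
      by (rule summable_norm_cancel)
        (use summable_norm_slice_coeff_power [OF unit abs_conv [OF norm_ge_zero that] norm_ge_zero]
          in \<open>simp add: norm_mult norm_power\<close>)
    then show ?thesis
      unfolding S_def holomorphic_on_open [OF open_ball]
      by (force intro: termdiffs_strong' [of 1])
  qed
  moreover have "Re (S \<zeta>) \<le> A" if "norm \<zeta> < 1" for \<zeta>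
    using Re_S [OF that] Re_le [of "slice i j k \<zeta>"] that by (simp add: norm_slice [OF unit])
  ultimately have "Re (S z) \<le> 2 * r / (1 + r) * A + (1 - r) / (1 + r) * Re (S 0)"
    using Re_le_harnack \<open>norm z \<le> r\<close> q(2) by blast
  moreover have "Re (S z) = qRe (qseries a q)"
    using Re_S [of z] \<open>norm z \<le> r\<close> q(2) \<open>slice i j k z = q\<close> by simp
  ultimately show ?thesis
    by (simp add: S_def)
qed

lemma norm_qseries_diff_le:
  assumes bound: "\<And>n. n \<ge> 1 \<Longrightarrow> norm (a n) \<le> 2 * B" and q: "norm q \<le> r" "r < 1"
  shows "norm (qseries a q - a 0) \<le> 2 * r / (1 - r) * B"
proof -
  have "0 \<le> r" "0 \<le> B"
    using q norm_ge_zero [of q] bound [of 1] norm_ge_zero [of "a 1"] by linarith+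
  define t where "t n = qmult (qpow q (Suc n)) (a (Suc n))" for n
  have t_le: "norm (t n) \<le> 2 * B * r * r ^ n" for n
  proof -
    have "norm (t n) = norm (a (Suc n)) * norm q ^ Suc n"
      by (simp only: t_def norm_qmult_qpow)
    also have "\<dots> \<le> 2 * B * r ^ Suc n"
      using bound [of "Suc n"] q \<open>0 \<le> B\<close> by (intro mult_mono power_mono) auto
    finally show ?thesis
      by (simp add: mult_ac)
  qed
  have geometric: "(\<lambda>n. 2 * B * r * r ^ n) sums (2 * r / (1 - r) * B)"
    using sums_mult [OF geometric_sums, of r "2 * B * r"] \<open>0 \<le> r\<close> q(2) by (simp add: mult_ac)
  have "summable (\<lambda>n. norm (t n))"
    using t_le by (intro summable_comparison_test' [OF sums_summable [OF geometric], where N = 0]) simp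
  moreover have "t sums (qseries a q - a 0)"
  proof -
    have "(\<lambda>n. qmult (qpow q n) (a n)) sums qseries a q"
      unfolding qseries_def
      using summable_norm_cancel [OF \<open>summable (\<lambda>n. norm (t n))\<close>]
      by (intro summable_sums) (simp add: t_def summable_Suc_iff [where f = "\<lambda>n. qmult (qpow q n) (a n)", symmetric])
    then show ?thesis
      unfolding t_def by (subst sums_Suc_iff) simp
  qed
  ultimately have "norm (qseries a q - a 0) \<le> (\<Sum>n. norm (t n))"
    by (metis sums_unique summable_norm)
  also have "\<dots> \<le> 2 * r / (1 - r) * B"
    using t_le summable_sums [OF \<open>summable (\<lambda>n. norm (t n))\<close>] geometric by (rule sums_le)
  finally show ?thesis .
qed

lemma norm_slice_deriv_le:
  assumes bound: "\<And>n. n \<ge> 1 \<Longrightarrow> norm (a n) \<le> 2 * B" and q: "norm q \<le> r" "r < 1" and "n \<ge> 1"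
  shows "norm (slice_deriv a n q) \<le> 2 * fact n / (1 - r) ^ (n + 1) * B"
proof -
  have "0 \<le> r" "0 \<le> B"
    using q norm_ge_zero [of q] bound [of 1] norm_ge_zero [of "a 1"] by linarith+
  define t where "t k = (fact (k + n) / fact k :: real) *\<^sub>R qmult (qpow q k) (a (k + n))" for k
  have majorant: "(\<lambda>k. fact (k + n) / fact k * r ^ k * (2 * B)) sums (fact n / (1 - r) ^ (n + 1) * (2 * B))"
    using \<open>0 \<le> r\<close> q(2) by (intro sums_mult2 sums_fact_ratio_power) simp
  have t_le: "norm (t k) \<le> fact (k + n) / fact k * r ^ k * (2 * B)" for k
  proof -
    have "norm (t k) = fact (k + n) / fact k * (norm (a (k + n)) * norm q ^ k)"
      by (simp add: t_def norm_qmult_qpow)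
    also have "\<dots> \<le> fact (k + n) / fact k * (2 * B * r ^ k)"
      using bound [of "k + n"] q \<open>n \<ge> 1\<close> \<open>0 \<le> B\<close>
      by (intro mult_left_mono mult_mono power_mono) auto
    finally show ?thesis
      by (simp add: mult_ac)
  qed
  have summable_t: "summable (\<lambda>k. norm (t k))"
    using t_le by (intro summable_comparison_test' [OF sums_summable [OF majorant], where N = 0]) simp
  have "norm (slice_deriv a n q) \<le> (\<Sum>k. norm (t k))"
    unfolding slice_deriv_def t_def [symmetric] using summable_t by (rule summable_norm)
  also have "\<dots> \<le> fact n / (1 - r) ^ (n + 1) * (2 * B)"
    using t_le summable_sums [OF summable_t] majorant by (rule sums_le)
  also have "\<dots> = 2 * fact n / (1 - r) ^ (n + 1) * B"
    by simp
  finally show ?thesis .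
qed

theorem theorem1p4:
  fixes a :: "nat \<Rightarrow> quat" and f :: "quat \<Rightarrow> quat" and A :: real
  assumes conv: "\<forall>q \<in> qball. summable (\<lambda>n. qmult (qpow q n) (a n))"
    and f_eq: "\<forall>q \<in> qball. f q = qseries a q"
    and bdd: "bdd_above ((\<lambda>q. qRe (f q)) ` qball)"
    and A_def: "A = (SUP q \<in> qball. qRe (f q))"
  shows "(\<forall>n::nat. n \<ge> 1 \<longrightarrow> norm (a n) \<le> 2 * (A - qRe (f 0)))
    \<and> (\<forall>q r. norm q \<le> r \<and> r < 1 \<longrightarrow>
          norm (f q - f 0) \<le> 2 * r / (1 - r) * (A - qRe (f 0)))
    \<and> (\<forall>q r. norm q \<le> r \<and> r < 1 \<longrightarrow>
          qRe (f q) \<le> 2 * r / (1 + r) * A + (1 - r) / (1 + r) * qRe (f 0))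
    \<and> (\<forall>q r (n::nat). norm q \<le> r \<and> r < 1 \<and> n \<ge> 1 \<longrightarrow>
          norm (slice_deriv a n q) \<le> 2 * fact n / (1 - r) ^ (n + 1) * (A - qRe (f 0)))"
proof -
  have f_eq': "f q = qseries a q" if "norm q < 1" for q
    using f_eq that unfolding qball_def by blast
  have f0: "f 0 = a 0"
    by (simp add: f_eq' qseries_zero)
  have abs_conv: "summable (\<lambda>n. norm (a n) * r ^ n)" if "0 \<le> r" "r < 1" for r
    using conv that by (intro summable_norm_coeff_power) (auto simp: qball_def)
  have Re_le: "qRe (qseries a q) \<le> A" if "norm q < 1" for q
    using cSUP_upper [OF _ bdd, of q] that by (simp add: A_def qball_def f_eq')
  have coeff: "norm (a n) \<le> 2 * (A - qRe (f 0))" if "n \<ge> 1" for n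
    using norm_coeff_le_qseries [OF abs_conv Re_le that] by (simp add: f0)
  moreover have "norm (f q - f 0) \<le> 2 * r / (1 - r) * (A - qRe (f 0))" if "norm q \<le> r" "r < 1" for q r
    using norm_qseries_diff_le [of a "A - qRe (f 0)", OF coeff that] that by (simp add: f_eq' f0)
  moreover have "qRe (f q) \<le> 2 * r / (1 + r) * A + (1 - r) / (1 + r) * qRe (f 0)"
    if "norm q \<le> r" "r < 1" for q r
    using qRe_qseries_le_harnack [OF abs_conv Re_le that] that by (simp add: f_eq' f0)
  moreover have "norm (slice_deriv a n q) \<le> 2 * fact n / (1 - r) ^ (n + 1) * (A - qRe (f 0))"
    if "norm q \<le> r" "r < 1" "n \<ge> 1" for q r n
    using norm_slice_deriv_le [of a "A - qRe (f 0)", OF coeff that] .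
  ultimately show ?thesis
    by blast
qed

end
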